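(* For integers $0\leq k\leq a<b$, the following identity of rational functions in $q$ holds: $$\frac1{\binom{a+k}{k}_q}-\frac1{\binom{b+k}{k}_q}=\sum_{i=1}^kq^{a+i}\frac{1-q^{b-a}}{1-q^{b+i}}\prod_{j=i}^k\frac{1-q^j}{1-q^{a+j}}\prod_{j=1}^{i-1}\frac{1-q^j}{1-q^{b+j}}.$$
   Context: For nonnegative integers $n$, $[n]!_q=\prod_{j=1}^n\frac{1-q^j}{1-q}$ (with $[0]!_q=1$), and for integers $0\le k\le n$, $\binom{n}{k}_q=\frac{[n]!_q}{[k]!_q[n-k]!_q}$. Empty products equal $1$ and empty sums equal $0$. *)

theory Defs
  imports "HOL-Computational_Algebra.Polynomial" "HOL-Computational_Algebra.Fraction_Field"
begin

definition qfact :: "'a::field \<Rightarrow> nat \<Rightarrow> 'a" where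
  "qfact q n = (\<Prod>j=1..n. (1 - q ^ j) / (1 - q))"

definition qbinom :: "'a::field \<Rightarrow> nat \<Rightarrow> nat \<Rightarrow> 'a" where
  "qbinom q n k = qfact q n / (qfact q k * qfact q (n - k))"

definition qvar :: "rat poly fract" where
  "qvar = Fract [:0, 1:] 1"

end

theory Submission
  imports Defs
begin

text \<open>
  Over any field in which q is not a root of unity, the inverse of the q-binomial coefficient
  is the product \<open>1 / qbinom q (a + k) k = \<Prod>j=1..k. (1 - q^j) / (1 - q^(a+j))\<close>.
  The difference of two such products telescopes,
  \<open>\<Prod>\<alpha> - \<Prod>\<beta> = \<Sum>i. (\<alpha> i - \<beta> i) * \<Prod>j>i. \<alpha> j * \<Prod>j<i. \<beta> j\<close>,
  and \<open>\<alpha> i - \<beta> i\<close> factors because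
  \<open>1 / (1 - q^m) - 1 / (1 - q^n) = q^m (1 - q^(n-m)) / ((1 - q^m) (1 - q^n))\<close>.
  The indeterminate of the rational function field is not a root of unity.
\<close>

lemma qfact_Suc: "qfact q (Suc n) = qfact q n * ((1 - q ^ Suc n) / (1 - q))"
  unfolding qfact_def by (simp add: prod.cl_ivl_Suc)

lemma qfact_add: "qfact q (a + k) = qfact q a * (\<Prod>j=1..k. (1 - q ^ (a + j)) / (1 - q))"
  by (induction k) (simp_all add: qfact_Suc prod.cl_ivl_Suc del: power_Suc)

lemma qfact_nonzero:
  fixes q :: "'a::field"
  assumes "\<And>n. 0 < n \<Longrightarrow> q ^ n \<noteq> 1"
  shows "qfact q n \<noteq> 0"
  using assms[of 1] assms unfolding qfact_def by auto

lemma inverse_qbinom_eq_prod: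
  fixes q :: "'a::field"
  assumes no_root: "\<And>n. 0 < n \<Longrightarrow> q ^ n \<noteq> 1"
  shows "1 / qbinom q (a + k) k = (\<Prod>j=1..k. (1 - q ^ j) / (1 - q ^ (a + j)))"
proof -
  have "1 - q \<noteq> 0"
    using no_root[of 1] by simp
  have "1 / qbinom q (a + k) k = qfact q k / (\<Prod>j=1..k. (1 - q ^ (a + j)) / (1 - q))"
    using qfact_nonzero[OF no_root, of a] by (simp add: qbinom_def qfact_add)
  also have "\<dots> = (\<Prod>j=1..k. ((1 - q ^ j) / (1 - q)) / ((1 - q ^ (a + j)) / (1 - q)))"
    by (simp only: qfact_def prod_dividef)
  also have "\<dots> = (\<Prod>j=1..k. (1 - q ^ j) / (1 - q ^ (a + j)))"
    using \<open>1 - q \<noteq> 0\<close> by simp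
  finally show ?thesis .
qed

lemma prod_diff_prod_eq_sum:
  fixes f g :: "nat \<Rightarrow> 'a::comm_ring_1"
  shows "(\<Prod>j=1..k. f j) - (\<Prod>j=1..k. g j) =
    (\<Sum>i=1..k. (f i - g i) * (\<Prod>j=Suc i..k. f j) * (\<Prod>j=1..<i. g j))"
proof (induction k)
  case 0
  then show ?case by simp
next
  case (Suc k)
  have suffix: "(\<Prod>j=Suc i..Suc k. f j) = (\<Prod>j=Suc i..k. f j) * f (Suc k)" if "i \<le> k" for i
    using that by (simp add: prod.cl_ivl_Suc)
  have "(\<Prod>j=1..Suc k. f j) - (\<Prod>j=1..Suc k. g j)
      = ((\<Prod>j=1..k. f j) - (\<Prod>j=1..k. g j)) * f (Suc k) + (f (Suc k) - g (Suc k)) * (\<Prod>j=1..k. g j)"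
    by (simp add: algebra_simps)
  also have "\<dots> = (\<Sum>i=1..k. (f i - g i) * ((\<Prod>j=Suc i..k. f j) * f (Suc k)) * (\<Prod>j=1..<i. g j))
      + (f (Suc k) - g (Suc k)) * (\<Prod>j=1..<Suc k. g j)"
    unfolding Suc.IH by (simp add: sum_distrib_left atLeastLessThanSuc_atLeastAtMost mult_ac)
  also have "\<dots> = (\<Sum>i=1..Suc k. (f i - g i) * (\<Prod>j=Suc i..Suc k. f j) * (\<Prod>j=1..<i. g j))"
    by (simp add: sum.cl_ivl_Suc suffix)
  finally show ?case .
qed

lemma one_minus_power_inverse_diff:
  fixes q :: "'a::field"
  assumes "m \<le> n" and "q ^ m \<noteq> 1" and "q ^ n \<noteq> 1"
  shows "1 / (1 - q ^ m) - 1 / (1 - q ^ n) = q ^ m * (1 - q ^ (n - m)) / ((1 - q ^ m) * (1 - q ^ n))"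
proof -
  have "q ^ n = q ^ m * q ^ (n - m)"
    using assms(1) by (simp flip: power_add)
  then show ?thesis
    using assms(2,3) by (simp add: field_simps)
qed

lemma inverse_qbinom_diff:
  fixes q :: "'a::field"
  assumes no_root: "\<And>n. 0 < n \<Longrightarrow> q ^ n \<noteq> 1" and "a \<le> b"
  shows "1 / qbinom q (a + k) k - 1 / qbinom q (b + k) k =
    (\<Sum>i=1..k. q ^ (a + i) * (1 - q ^ (b - a)) / (1 - q ^ (b + i))
       * (\<Prod>j=i..k. (1 - q ^ j) / (1 - q ^ (a + j)))
       * (\<Prod>j=1..i-1. (1 - q ^ j) / (1 - q ^ (b + j))))"
proof -
  define \<alpha> where "\<alpha> j = (1 - q ^ j) / (1 - q ^ (a + j))" for j
  define \<beta> where "\<beta> j = (1 - q ^ j) / (1 - q ^ (b + j))" for j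
  have summand: "(\<alpha> i - \<beta> i) * (\<Prod>j=Suc i..k. \<alpha> j) * (\<Prod>j=1..<i. \<beta> j) =
      q ^ (a + i) * (1 - q ^ (b - a)) / (1 - q ^ (b + i)) * (\<Prod>j=i..k. \<alpha> j) * (\<Prod>j=1..i-1. \<beta> j)"
    if "1 \<le> i" "i \<le> k" for i
  proof -
    have "\<alpha> i - \<beta> i = (1 - q ^ i) * (1 / (1 - q ^ (a + i)) - 1 / (1 - q ^ (b + i)))"
      by (simp add: \<alpha>_def \<beta>_def right_diff_distrib)
    also have "\<dots> = q ^ (a + i) * (1 - q ^ (b - a)) / (1 - q ^ (b + i)) * \<alpha> i"
      using one_minus_power_inverse_diff[of "a + i" "b + i" q] \<open>a \<le> b\<close> that no_root
      by (simp add: \<alpha>_def mult_ac)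
    moreover have "{1..<i} = {1..i-1}"
      using that by auto
    ultimately show ?thesis
      using that by (simp add: prod.atLeast_Suc_atMost mult_ac)
  qed
  have "1 / qbinom q (a + k) k - 1 / qbinom q (b + k) k = (\<Prod>j=1..k. \<alpha> j) - (\<Prod>j=1..k. \<beta> j)"
    by (simp add: inverse_qbinom_eq_prod[OF no_root] \<alpha>_def \<beta>_def)
  also have "\<dots> = (\<Sum>i=1..k. (\<alpha> i - \<beta> i) * (\<Prod>j=Suc i..k. \<alpha> j) * (\<Prod>j=1..<i. \<beta> j))"
    by (rule prod_diff_prod_eq_sum)
  also have "\<dots> = (\<Sum>i=1..k. q ^ (a + i) * (1 - q ^ (b - a)) / (1 - q ^ (b + i))
      * (\<Prod>j=i..k. \<alpha> j) * (\<Prod>j=1..i-1. \<beta> j))"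
    using summand by (intro sum.cong) auto
  finally show ?thesis
    unfolding \<alpha>_def \<beta>_def .
qed

lemma qvar_power: "qvar ^ n = Fract ([:0, 1:] ^ n) 1"
  by (induction n) (simp_all add: qvar_def One_fract_def)

lemma qvar_power_ne_1:
  assumes "0 < n"
  shows "qvar ^ n \<noteq> 1"
proof -
  have "degree ([:0, 1:] ^ n :: rat poly) = n"
    using degree_linear_power[of 0 n] by simp
  then have "[:0, 1:] ^ n \<noteq> (1 :: rat poly)"
    using assms by auto
  then show ?thesis
    by (simp add: qvar_power One_fract_def eq_fract)
qed

theorem lemma8:
  fixes k a b :: nat
  assumes "k \<le> a" and "a < b"
  shows "1 / qbinom qvar (a + k) k - 1 / qbinom qvar (b + k) k =
    (\<Sum>i=1..k. qvar ^ (a + i) * (1 - qvar ^ (b - a)) / (1 - qvar ^ (b + i))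
       * (\<Prod>j=i..k. (1 - qvar ^ j) / (1 - qvar ^ (a + j)))
       * (\<Prod>j=1..i-1. (1 - qvar ^ j) / (1 - qvar ^ (b + j))))"
  by (rule inverse_qbinom_diff[OF qvar_power_ne_1]) (use assms(2) in simp_all)

end
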